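(* Let $x<w$ in $W$ and let $\mathfrak w=s_1\cdots s_n$ be a reduced word of $w$ which is a good word for $x$ and satisfies $\lambda_{x,\mathfrak w}=\lambda(\mathscr C^-_{x,\mathfrak w})^*=(i_1,\ldots,i_d)$ with $i_1=1$. Write $s_i=s_{\alpha_i}$ with $\alpha_i$ simple. Then: (i) $x<s_1x$; (ii) $S(x,s_1w)=S(x,w)\setminus\{\gamma_1\}$, where $\gamma_1=s_n\cdots s_2\alpha_1$; (iii) $s_1\mathfrak w=s_2\cdots s_n$ is a good word of $s_1w$ for $x$; (iv) $\lambda_{x,s_1\mathfrak w}=(i_2-1,\ldots,i_d-1)=\lambda(\mathscr C^-_{x,s_1\mathfrak w})^*$ (positions in $s_2\cdots s_n$ numbered $1,\ldots,n-1$).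
   Context: Let $W$ be the Weyl group of a finite reduced root system $\Phi$ with positive roots $\Phi_+$ and simple reflections $S$, length $\ell$, Bruhat order $\le$. For $x\le w$, $S(x,w)=\{\alpha\in\Phi_+: x\le ws_\alpha<w\}$. For a reduced word $\mathfrak w=s_1\cdots s_n$ of $w$, $\lambda_{x,\mathfrak w}$ is the set of $i$ with $x\le s_1\cdots\widehat{s_i}\cdots s_n$, written as an increasing tuple $(i_1,\ldots,i_d)$; $\mathfrak w$ is a good word for $x$ if $x=s_1\cdots\widehat{s_{i_1}}\cdots\widehat{s_{i_d}}\cdots s_n$. Maximal chains $w=w_0\to\cdots\to w_d=x$ of covers in $[x,w]$ are labeled by $\lambda(\mathscr C)=(i_1,\ldots,i_d)$, where $w_k$ is obtained from $\mathfrak w$ by deleting $s_{i_1},\ldots,s_{i_k}$; $\mathscr C^-_{x,\mathfrak w}$ denotes the unique maximal chain with strictly decreasing label (which is lexicographically largest, by Björner–Wachs shellability). For a tuple $\lambda=(a_1,\ldots,a_d)$, $\lambda^*=(a_d,\ldots,a_1)$. *)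

theory Defs
  imports "HOL-Analysis.Analysis"
begin

definition srefl :: "'a::euclidean_space \<Rightarrow> 'a \<Rightarrow> 'a" where
  "srefl \<alpha> v = v - (2 * (v \<bullet> \<alpha>) / (\<alpha> \<bullet> \<alpha>)) *\<^sub>R \<alpha>"

definition root_system :: "'a::euclidean_space set \<Rightarrow> bool" where
  "root_system \<Phi> \<longleftrightarrow> finite \<Phi> \<and> 0 \<notin> \<Phi> \<and> span \<Phi> = UNIV
     \<and> (\<forall>\<alpha>\<in>\<Phi>. srefl \<alpha> ` \<Phi> = \<Phi>)
     \<and> (\<forall>\<alpha>\<in>\<Phi>. \<forall>\<beta>\<in>\<Phi>. 2 * (\<beta> \<bullet> \<alpha>) / (\<alpha> \<bullet> \<alpha>) \<in> \<int>)
     \<and> (\<forall>\<alpha>\<in>\<Phi>. \<forall>c::real. c *\<^sub>R \<alpha> \<in> \<Phi> \<longrightarrow> c = 1 \<or> c = -1)"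

definition nonneg_comb :: "'a::euclidean_space set \<Rightarrow> 'a \<Rightarrow> bool" where
  "nonneg_comb \<Delta> \<beta> \<longleftrightarrow> (\<exists>c. (\<forall>\<alpha>\<in>\<Delta>. c \<alpha> \<ge> (0::real)) \<and> \<beta> = (\<Sum>\<alpha>\<in>\<Delta>. c \<alpha> *\<^sub>R \<alpha>))"

definition simple_system :: "'a::euclidean_space set \<Rightarrow> 'a set \<Rightarrow> bool" where
  "simple_system \<Phi> \<Delta> \<longleftrightarrow> \<Delta> \<subseteq> \<Phi> \<and> independent \<Delta>
     \<and> (\<forall>\<beta>\<in>\<Phi>. nonneg_comb \<Delta> \<beta> \<or> nonneg_comb \<Delta> (- \<beta>))"

definition pos_roots :: "'a::euclidean_space set \<Rightarrow> 'a set \<Rightarrow> 'a set" where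
  "pos_roots \<Phi> \<Delta> = {\<beta>\<in>\<Phi>. nonneg_comb \<Delta> \<beta>}"

text \<open>Product of a word of simple reflections (given by the list of simple roots
  alpha_1 ... alpha_n): s_1 s_2 ... s_n, acting on vectors (leftmost applied last).\<close>
definition word_prod :: "'a::euclidean_space list \<Rightarrow> 'a \<Rightarrow> 'a" where
  "word_prod ws = foldr (\<lambda>\<alpha> f. srefl \<alpha> \<circ> f) ws id"

definition weyl :: "'a::euclidean_space set \<Rightarrow> ('a \<Rightarrow> 'a) set" where
  "weyl \<Delta> = {word_prod ws | ws. set ws \<subseteq> \<Delta>}"

definition len :: "'a::euclidean_space set \<Rightarrow> ('a \<Rightarrow> 'a) \<Rightarrow> nat" where
  "len \<Delta> w = (LEAST n. \<exists>ws. set ws \<subseteq> \<Delta> \<and> length ws = n \<and> word_prod ws = w)"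

definition reduced_word :: "'a::euclidean_space set \<Rightarrow> 'a list \<Rightarrow> ('a \<Rightarrow> 'a) \<Rightarrow> bool" where
  "reduced_word \<Delta> ws w \<longleftrightarrow> set ws \<subseteq> \<Delta> \<and> word_prod ws = w \<and> length ws = len \<Delta> w"

inductive bruhat_le :: "'a::euclidean_space set \<Rightarrow> 'a set \<Rightarrow> ('a \<Rightarrow> 'a) \<Rightarrow> ('a \<Rightarrow> 'a) \<Rightarrow> bool"
  for \<Phi> \<Delta> where
  bruhat_refl: "x \<in> weyl \<Delta> \<Longrightarrow> bruhat_le \<Phi> \<Delta> x x"
| bruhat_step: "bruhat_le \<Phi> \<Delta> x y \<Longrightarrow> \<beta> \<in> pos_roots \<Phi> \<Delta> \<Longrightarrow>
     len \<Delta> y < len \<Delta> (y \<circ> srefl \<beta>) \<Longrightarrow> bruhat_le \<Phi> \<Delta> x (y \<circ> srefl \<beta>)"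

definition bruhat_less :: "'a::euclidean_space set \<Rightarrow> 'a set \<Rightarrow> ('a \<Rightarrow> 'a) \<Rightarrow> ('a \<Rightarrow> 'a) \<Rightarrow> bool" where
  "bruhat_less \<Phi> \<Delta> x w \<longleftrightarrow> bruhat_le \<Phi> \<Delta> x w \<and> x \<noteq> w"

definition Sxw :: "'a::euclidean_space set \<Rightarrow> 'a set \<Rightarrow> ('a \<Rightarrow> 'a) \<Rightarrow> ('a \<Rightarrow> 'a) \<Rightarrow> 'a set" where
  "Sxw \<Phi> \<Delta> x w = {\<alpha>\<in>pos_roots \<Phi> \<Delta>. bruhat_le \<Phi> \<Delta> x (w \<circ> srefl \<alpha>)
                                    \<and> bruhat_less \<Phi> \<Delta> (w \<circ> srefl \<alpha>) w}"

text \<open>Delete the letters at the (1-based) positions in I.\<close>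
definition del_pos :: "'b list \<Rightarrow> nat set \<Rightarrow> 'b list" where
  "del_pos ws I = nths ws {j. Suc j \<notin> I}"

definition lam_set :: "'a::euclidean_space set \<Rightarrow> 'a set \<Rightarrow> ('a \<Rightarrow> 'a) \<Rightarrow> 'a list \<Rightarrow> nat set" where
  "lam_set \<Phi> \<Delta> x ws = {i\<in>{1..length ws}. bruhat_le \<Phi> \<Delta> x (word_prod (del_pos ws {i}))}"

definition lam :: "'a::euclidean_space set \<Rightarrow> 'a set \<Rightarrow> ('a \<Rightarrow> 'a) \<Rightarrow> 'a list \<Rightarrow> nat list" where
  "lam \<Phi> \<Delta> x ws = sorted_list_of_set (lam_set \<Phi> \<Delta> x ws)"

definition good_word :: "'a::euclidean_space set \<Rightarrow> 'a set \<Rightarrow> ('a \<Rightarrow> 'a) \<Rightarrow> 'a list \<Rightarrow> bool" where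
  "good_word \<Phi> \<Delta> x ws \<longleftrightarrow> x = word_prod (del_pos ws (lam_set \<Phi> \<Delta> x ws))"

definition bruhat_cover :: "'a::euclidean_space set \<Rightarrow> 'a set \<Rightarrow> ('a \<Rightarrow> 'a) \<Rightarrow> ('a \<Rightarrow> 'a) \<Rightarrow> bool" where
  "bruhat_cover \<Phi> \<Delta> u v \<longleftrightarrow> bruhat_less \<Phi> \<Delta> u v \<and> len \<Delta> v = Suc (len \<Delta> u)"

text \<open>C = [w_0, ..., w_d] is a maximal chain w = w_0 -> ... -> w_d = x of covers in [x,w],
  where w is the element of the reduced word ws, and L = (i_1,...,i_d) is its label:
  w_k is obtained from ws by deleting the letters at positions i_1,...,i_k.\<close>
definition chain_label :: "'a::euclidean_space set \<Rightarrow> 'a set \<Rightarrow> ('a \<Rightarrow> 'a) \<Rightarrow> 'a list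
     \<Rightarrow> ('a \<Rightarrow> 'a) list \<Rightarrow> nat list \<Rightarrow> bool" where
  "chain_label \<Phi> \<Delta> x ws C L \<longleftrightarrow>
     length C = Suc (length L) \<and> C ! 0 = word_prod ws \<and> last C = x
     \<and> (\<forall>k < length L. bruhat_cover \<Phi> \<Delta> (C ! Suc k) (C ! k))
     \<and> distinct L \<and> set L \<subseteq> {1..length ws}
     \<and> (\<forall>k \<le> length L. C ! k = word_prod (del_pos ws (set (take k L))))"

text \<open>L is the label of the maximal chain C^-_{x,ws} with strictly decreasing label
  (unique by Bjoerner-Wachs).\<close>
definition Cminus_label :: "'a::euclidean_space set \<Rightarrow> 'a set \<Rightarrow> ('a \<Rightarrow> 'a) \<Rightarrow> 'a list
     \<Rightarrow> nat list \<Rightarrow> bool" where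
  "Cminus_label \<Phi> \<Delta> x ws L \<longleftrightarrow> (\<exists>C. chain_label \<Phi> \<Delta> x ws C L) \<and> sorted_wrt (>) L"

end

theory Submission
  imports Defs
begin

text \<open>Since the decreasing chain deletes the first letter \<open>s\<^sub>1\<close> last, every element of it but the
  last is \<open>s\<^sub>1 d\<close> with \<open>d\<close> a subword of \<open>s\<^sub>2\<cdots>s\<^sub>n\<close>, and its last step is the cover \<open>x < s\<^sub>1 x\<close>,
  which is (i). Counting lengths gives \<open>d < s\<^sub>1 d\<close>, so Deodhar's property Z (for \<open>x < s\<^sub>1 x\<close>:
  \<open>x \<le> s\<^sub>1 u \<longleftrightarrow> x \<le> u\<close>) turns the chain into a maximal chain of \<open>s\<^sub>2\<cdots>s\<^sub>n\<close> with the shifted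
  decreasing label, and shows that deleting letter \<open>j + 1\<close> from \<open>s\<^sub>1\<cdots>s\<^sub>n\<close> and letter \<open>j\<close> from
  \<open>s\<^sub>2\<cdots>s\<^sub>n\<close> give elements above \<open>x\<close> simultaneously; this gives (iii) and (iv).
  For (ii), \<open>s\<^sub>1 w\<close> has the inversions of \<open>w\<close> except \<open>\<gamma>\<^sub>1\<close>, and property Z again shows that
  \<open>x \<le> w s\<^sub>\<beta>\<close> and \<open>x \<le> s\<^sub>1 w s\<^sub>\<beta>\<close> are equivalent.
  Property Z itself follows from the lifting property, proved by induction on the Bruhat order
  with the strong exchange condition; the latter needs every reflection in a root to lie in
  the Weyl group, which is shown using a longest element.\<close>

lemma srefl_self: "\<alpha> \<noteq> 0 \<Longrightarrow> srefl \<alpha> \<alpha> = - \<alpha>"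
  unfolding srefl_def by (simp add: scaleR_2 algebra_simps)

lemma srefl_srefl: "\<alpha> \<noteq> 0 \<Longrightarrow> srefl \<alpha> (srefl \<alpha> v) = v"
  unfolding srefl_def by (simp add: inner_diff_left algebra_simps)

lemma srefl_comp_srefl: "\<alpha> \<noteq> 0 \<Longrightarrow> srefl \<alpha> \<circ> (srefl \<alpha> \<circ> f) = f"
  by (simp add: fun_eq_iff srefl_srefl)

lemma comp_srefl_srefl: "\<alpha> \<noteq> 0 \<Longrightarrow> f \<circ> srefl \<alpha> \<circ> srefl \<alpha> = f"
  by (simp add: fun_eq_iff srefl_srefl)

lemma srefl_uminus: "srefl (- \<alpha>) = srefl \<alpha>"
  unfolding srefl_def by (simp add: fun_eq_iff)

lemma orthogonal_transformation_srefl: "orthogonal_transformation (srefl \<alpha>)"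
proof -
  have "linear (srefl \<alpha>)"
    unfolding srefl_def
    by (intro linearI) (auto simp: inner_add_left algebra_simps add_divide_distrib scaleR_add_left)
  moreover have "srefl \<alpha> u \<bullet> srefl \<alpha> v = u \<bullet> v" for u v
    by (cases "\<alpha> = 0")
       (simp_all add: srefl_def inner_diff_left inner_diff_right algebra_simps inner_commute)
  ultimately show ?thesis by (simp add: orthogonal_transformation_def)
qed

lemma srefl_conjugate:
  assumes "orthogonal_transformation f"
  shows "srefl (f \<beta>) \<circ> f = f \<circ> srefl \<beta>"
proof
  fix v
  have l: "linear f" using assms by (rule orthogonal_transformation_linear)
  have "f v \<bullet> f \<beta> = v \<bullet> \<beta>" "f \<beta> \<bullet> f \<beta> = \<beta> \<bullet> \<beta>"
    using assms by (simp_all add: orthogonal_transformation_def)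
  then show "(srefl (f \<beta>) \<circ> f) v = (f \<circ> srefl \<beta>) v"
    by (simp add: srefl_def linear_diff[OF l] linear_cmul[OF l])
qed

lemma word_prod_Nil [simp]: "word_prod [] = id"
  by (simp add: word_prod_def)

lemma word_prod_Cons [simp]: "word_prod (\<alpha> # ws) = srefl \<alpha> \<circ> word_prod ws"
  by (simp add: word_prod_def)

lemma word_prod_append [simp]: "word_prod (xs @ ys) = word_prod xs \<circ> word_prod ys"
  by (induction xs) (auto simp: comp_assoc)

lemma orthogonal_transformation_word_prod: "orthogonal_transformation (word_prod ws)"
proof (induction ws)
  case Nil
  show ?case by (simp add: id_def)
next
  case (Cons \<alpha> ws)
  show ?case
    unfolding word_prod_Cons by (rule orthogonal_transformation_compose[OF orthogonal_transformation_srefl Cons.IH])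
qed

lemma word_prod_insert:
  assumes "word_prod q (word_prod (rev q) \<alpha>) = \<alpha>"
  shows "word_prod (p @ \<alpha> # q) = word_prod (p @ q) \<circ> srefl (word_prod (rev q) \<alpha>)"
  using srefl_conjugate[OF orthogonal_transformation_word_prod, of q "word_prod (rev q) \<alpha>"] assms
  by (simp add: comp_assoc)

lemma del_pos_insert_0: "del_pos xs (insert 0 A) = del_pos xs A"
  by (simp add: del_pos_def)

lemma del_pos_empty: "del_pos xs {} = xs"
  by (simp add: del_pos_def nths_all)

lemma del_pos_Cons:
  "del_pos (a # xs) A = (if 1 \<in> A then del_pos xs {j. Suc j \<in> A} else a # del_pos xs {j. Suc j \<in> A})"
  by (simp add: del_pos_def nths_Cons)

lemma Suc_preimage_eq_image_pred:
  assumes "0 \<notin> A"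
  shows "{j. Suc j \<in> A} = (\<lambda>i. i - 1) ` A"
proof (intro set_eqI iffI)
  fix j assume "j \<in> {j. Suc j \<in> A}"
  then show "j \<in> (\<lambda>i. i - 1) ` A" by (force intro: image_eqI[where x = "Suc j"])
next
  fix j assume "j \<in> (\<lambda>i. i - 1) ` A"
  then obtain i where "i \<in> A" "j = i - 1" by blast
  then show "j \<in> {j. Suc j \<in> A}" using assms by (cases i) auto
qed

lemma inj_on_pred:
  assumes "0 \<notin> A"
  shows "inj_on (\<lambda>i::nat. i - 1) A"
proof (rule inj_onI)
  fix x y assume xy: "x \<in> A" "y \<in> A" "x - 1 = y - 1"
  have "x \<noteq> 0" "y \<noteq> 0" using assms xy(1,2) by metis+
  then show "x = y" using xy(3) by arith
qed

lemma del_pos_Cons_pred: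
  assumes "0 \<notin> A"
  shows "del_pos (a # xs) A
    = (if 1 \<in> A then del_pos xs ((\<lambda>i. i - 1) ` A) else a # del_pos xs ((\<lambda>i. i - 1) ` A))"
  using del_pos_Cons[of a xs A] Suc_preimage_eq_image_pred[OF assms] by simp

lemma set_del_pos_subset: "set (del_pos xs A) \<subseteq> set xs"
  by (simp add: del_pos_def set_nths_subset)

lemma length_del_pos_distinct:
  assumes "distinct L" "set L \<subseteq> {1..length xs}"
  shows "length (del_pos xs (set L)) = length xs - length L"
proof -
  have "0 \<notin> set L" using assms(2) by auto
  note pred = Suc_preimage_eq_image_pred[OF this, symmetric]
  have "{i. i < length xs \<and> Suc i \<notin> set L} = {..<length xs} - (\<lambda>i. i - 1) ` set L"
    unfolding pred by auto
  moreover have "card ((\<lambda>i. i - 1) ` set L) = length L"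
    using card_image[OF inj_on_pred[OF \<open>0 \<notin> set L\<close>]] distinct_card[OF assms(1)] by simp
  moreover have "(\<lambda>i. i - 1) ` set L \<subseteq> {..<length xs}"
    using assms(2) by (force simp: subset_iff)
  ultimately show ?thesis
    by (simp add: del_pos_def length_nths card_Diff_subset finite_subset)
qed

lemma chain_label_nth:
  "chain_label \<Phi> \<Delta> x ws C L \<Longrightarrow> j \<le> length L \<Longrightarrow> C ! j = word_prod (del_pos ws (set (take j L)))"
  unfolding chain_label_def by blast

lemma chain_label_last:
  assumes "chain_label \<Phi> \<Delta> x ws C L"
  shows "x = word_prod (del_pos ws (set L))"
proof -
  have "length C = Suc (length L)" "last C = x"
    using assms unfolding chain_label_def by blast+
  then have "x = C ! length L" using last_conv_nth[of C] by (cases C) auto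
  then show ?thesis using chain_label_nth[OF assms, of "length L"] by simp
qed

lemma chain_label_snoc_1:
  assumes "chain_label \<Phi> \<Delta> x ws C (L @ [1])"
  shows "0 \<notin> set L" "1 \<notin> set L"
  using assms unfolding chain_label_def by auto

lemma chain_label_Cons_nth:
  assumes C: "chain_label \<Phi> \<Delta> x (\<alpha> # ws) C (L @ [1])" and j: "j \<le> length L"
  shows "C ! j = srefl \<alpha> \<circ> word_prod (del_pos ws (set (take j (map (\<lambda>i. i - 1) L))))"
proof -
  have "0 \<notin> set (take j L)" "1 \<notin> set (take j L)"
    using chain_label_snoc_1[OF C] in_set_takeD by metis+
  then have "del_pos (\<alpha> # ws) (set (take j L)) = \<alpha> # del_pos ws (set (take j (map (\<lambda>i. i - 1) L)))"
    by (simp add: del_pos_Cons_pred take_map)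
  then show ?thesis using chain_label_nth[OF C] j by simp
qed

lemma chain_label_Cons_last:
  assumes C: "chain_label \<Phi> \<Delta> x (\<alpha> # ws) C (L @ [1])"
  shows "x = word_prod (del_pos ws (set (map (\<lambda>i. i - 1) L)))"
proof -
  have "0 \<notin> set (L @ [1])" using chain_label_snoc_1[OF C] by simp
  then have "del_pos (\<alpha> # ws) (set (L @ [1])) = del_pos ws (insert 0 (set (map (\<lambda>i. i - 1) L)))"
    by (simp add: del_pos_Cons_pred)
  then show ?thesis using chain_label_last[OF C] by (simp add: del_pos_insert_0)
qed

lemma chain_label_Cons_label:
  assumes C: "chain_label \<Phi> \<Delta> x (\<alpha> # ws) C (L @ [1])"
  shows "distinct (map (\<lambda>i. i - 1) L)" "set (map (\<lambda>i. i - 1) L) \<subseteq> {1..length ws}"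
proof -
  have dist: "distinct (L @ [1])" and range: "set (L @ [1]) \<subseteq> {1..length (\<alpha> # ws)}"
    using C unfolding chain_label_def by blast+
  show "distinct (map (\<lambda>i. i - 1) L)"
    using dist chain_label_snoc_1(1)[OF C] inj_on_pred by (simp add: distinct_map)
  show "set (map (\<lambda>i. i - 1) L) \<subseteq> {1..length ws}"
  proof
    fix j assume "j \<in> set (map (\<lambda>i. i - 1) L)"
    then obtain i where "i \<in> set L" "j = i - 1" by auto
    moreover have "i \<in> {1..Suc (length ws)}" "i \<noteq> 1"
      using range dist \<open>i \<in> set L\<close> by auto
    ultimately show "j \<in> {1..length ws}" by auto
  qed
qed

lemma sorted_list_of_set_set_strict: "sorted_wrt (<) xs \<Longrightarrow> sorted_list_of_set (set xs) = xs"
  by (simp add: sorted_list_of_set_sort_remdups strict_sorted_iff distinct_remdups_id sorted_sort_id)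

locale based_root_system =
  fixes \<Phi> \<Delta> :: "'a::euclidean_space set"
  assumes root_system: "root_system \<Phi>" and simple_system: "simple_system \<Phi> \<Delta>"
begin

abbreviation "Pos \<equiv> pos_roots \<Phi> \<Delta>"
abbreviation coxeter_length ("\<ell>") where "\<ell> \<equiv> len \<Delta>"

lemma finite_roots: "finite \<Phi>"
  and span_roots: "span \<Phi> = UNIV"
  and root_nonzero: "\<beta> \<in> \<Phi> \<Longrightarrow> \<beta> \<noteq> 0"
  and srefl_root: "\<alpha> \<in> \<Phi> \<Longrightarrow> \<beta> \<in> \<Phi> \<Longrightarrow> srefl \<alpha> \<beta> \<in> \<Phi>"
  and root_multiple: "\<alpha> \<in> \<Phi> \<Longrightarrow> c *\<^sub>R \<alpha> \<in> \<Phi> \<Longrightarrow> c = 1 \<or> c = -1"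
  using root_system unfolding root_system_def by blast+

lemma simple_roots: "\<Delta> \<subseteq> \<Phi>"
  and independent_simple: "independent \<Delta>"
  using simple_system unfolding simple_system_def by blast+

lemma finite_simple: "finite \<Delta>"
  using simple_roots finite_roots finite_subset by blast

lemma simple_nonzero: "\<alpha> \<in> \<Delta> \<Longrightarrow> \<alpha> \<noteq> 0"
  using simple_roots root_nonzero by blast

lemma uminus_root: "\<beta> \<in> \<Phi> \<Longrightarrow> - \<beta> \<in> \<Phi>"
  using srefl_root[of \<beta> \<beta>] srefl_self root_nonzero by metis

lemma pos_roots_subset: "Pos \<subseteq> \<Phi>"
  by (auto simp: pos_roots_def)

lemma root_pos_or_neg: "\<beta> \<in> \<Phi> \<Longrightarrow> \<beta> \<in> Pos \<or> - \<beta> \<in> Pos"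
  using simple_system uminus_root by (auto simp: simple_system_def pos_roots_def)

lemma simple_coeff_eq_0: "(\<Sum>\<gamma>\<in>\<Delta>. u \<gamma> *\<^sub>R \<gamma>) = 0 \<Longrightarrow> \<gamma> \<in> \<Delta> \<Longrightarrow> u \<gamma> = 0"
  using independent_simple unfolding independent_explicit by blast

lemma sum_simple_delta: "\<alpha> \<in> \<Delta> \<Longrightarrow> (\<Sum>\<gamma>\<in>\<Delta>. (if \<gamma> = \<alpha> then k else 0) *\<^sub>R \<gamma>) = k *\<^sub>R \<alpha>"
  using finite_simple by (simp add: if_distrib[where f="\<lambda>c. c *\<^sub>R _"] sum.delta cong: if_cong)

lemma not_pos_and_neg: "\<beta> \<in> \<Phi> \<Longrightarrow> \<beta> \<in> Pos \<Longrightarrow> - \<beta> \<notin> Pos"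
proof
  assume "\<beta> \<in> \<Phi>" "\<beta> \<in> Pos" "- \<beta> \<in> Pos"
  then obtain c c' where c: "\<forall>\<alpha>\<in>\<Delta>. c \<alpha> \<ge> 0" "\<beta> = (\<Sum>\<alpha>\<in>\<Delta>. c \<alpha> *\<^sub>R \<alpha>)"
    and c': "\<forall>\<alpha>\<in>\<Delta>. c' \<alpha> \<ge> 0" "- \<beta> = (\<Sum>\<alpha>\<in>\<Delta>. c' \<alpha> *\<^sub>R \<alpha>)"
    by (auto simp: pos_roots_def nonneg_comb_def)
  have "(\<Sum>\<alpha>\<in>\<Delta>. (c \<alpha> + c' \<alpha>) *\<^sub>R \<alpha>) = 0"
    using c(2)[symmetric] c'(2)[symmetric] by (simp add: scaleR_add_left sum.distrib)
  then have "\<forall>\<alpha>\<in>\<Delta>. c \<alpha> = 0"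
    using simple_coeff_eq_0[of "\<lambda>\<alpha>. c \<alpha> + c' \<alpha>"] c(1) c'(1) by (metis add_nonneg_eq_0_iff)
  then show False using c(2) root_nonzero \<open>\<beta> \<in> \<Phi>\<close> by simp
qed

lemma simple_pos:
  assumes "\<alpha> \<in> \<Delta>"
  shows "\<alpha> \<in> Pos"
proof -
  have "nonneg_comb \<Delta> \<alpha>"
    unfolding nonneg_comb_def using sum_simple_delta[OF assms, of 1]
    by (intro exI[of _ "\<lambda>\<gamma>. if \<gamma> = \<alpha> then 1 else 0"]) auto
  then show ?thesis using assms simple_roots by (auto simp: pos_roots_def)
qed

text \<open>A positive root sent to a negative one has support \<open>{\<alpha>}\<close>, so it is \<open>\<alpha>\<close> since the system
  is reduced.\<close>
lemma srefl_simple_pos: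
  assumes a: "\<alpha> \<in> \<Delta>" and b: "\<beta> \<in> Pos" and ne: "\<beta> \<noteq> \<alpha>"
  shows "srefl \<alpha> \<beta> \<in> Pos"
proof (rule ccontr)
  assume "srefl \<alpha> \<beta> \<notin> Pos"
  moreover have "srefl \<alpha> \<beta> \<in> \<Phi>"
    using a b simple_roots pos_roots_subset srefl_root by blast
  ultimately have "- srefl \<alpha> \<beta> \<in> Pos" using root_pos_or_neg by blast
  then obtain c' where c': "\<forall>\<gamma>\<in>\<Delta>. c' \<gamma> \<ge> 0" "- srefl \<alpha> \<beta> = (\<Sum>\<gamma>\<in>\<Delta>. c' \<gamma> *\<^sub>R \<gamma>)"
    by (auto simp: pos_roots_def nonneg_comb_def)
  obtain c where c: "\<forall>\<gamma>\<in>\<Delta>. c \<gamma> \<ge> 0" "\<beta> = (\<Sum>\<gamma>\<in>\<Delta>. c \<gamma> *\<^sub>R \<gamma>)"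
    using b by (auto simp: pos_roots_def nonneg_comb_def)
  define k where "k = 2 * (\<beta> \<bullet> \<alpha>) / (\<alpha> \<bullet> \<alpha>)"
  define u where "u \<gamma> = c \<gamma> + c' \<gamma> - (if \<gamma> = \<alpha> then k else 0)" for \<gamma>
  have "(\<Sum>\<gamma>\<in>\<Delta>. u \<gamma> *\<^sub>R \<gamma>) = \<beta> + (- srefl \<alpha> \<beta>) - k *\<^sub>R \<alpha>"
    using c(2) c'(2) sum_simple_delta[OF a, of k] unfolding u_def
    by (simp add: scaleR_add_left scaleR_diff_left sum.distrib sum_subtractf)
  also have "\<dots> = 0" by (simp add: srefl_def k_def)
  finally have u0: "\<And>\<gamma>. \<gamma> \<in> \<Delta> \<Longrightarrow> u \<gamma> = 0" using simple_coeff_eq_0 by blast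
  have "c \<gamma> = 0" if "\<gamma> \<in> \<Delta>" "\<gamma> \<noteq> \<alpha>" for \<gamma>
    using u0[OF that(1)] c(1) c'(1) that unfolding u_def by (simp add: add_nonneg_eq_0_iff)
  then have "\<beta> = (\<Sum>\<gamma>\<in>\<Delta>. (if \<gamma> = \<alpha> then c \<alpha> else 0) *\<^sub>R \<gamma>)"
    unfolding c(2) by (intro sum.cong) auto
  then have \<beta>: "\<beta> = c \<alpha> *\<^sub>R \<alpha>" using sum_simple_delta[OF a] by simp
  moreover have "c \<alpha> = 1 \<or> c \<alpha> = -1"
    using root_multiple[of \<alpha> "c \<alpha>"] \<beta> a b simple_roots pos_roots_subset by auto
  ultimately show False using c(1) a ne by auto
qed

lemma word_prod_rev_cancel: "set ws \<subseteq> \<Delta> \<Longrightarrow> word_prod (rev ws) (word_prod ws v) = v"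
  by (induction ws arbitrary: v) (auto simp: srefl_srefl simple_nonzero)

lemma word_prod_cancel_rev: "set ws \<subseteq> \<Delta> \<Longrightarrow> word_prod ws (word_prod (rev ws) v) = v"
  using word_prod_rev_cancel[of "rev ws"] by simp

lemma word_prod_root: "set ws \<subseteq> \<Delta> \<Longrightarrow> \<beta> \<in> \<Phi> \<Longrightarrow> word_prod ws \<beta> \<in> \<Phi>"
  by (induction ws) (use simple_roots srefl_root in auto)

lemma word_prod_in_weyl: "set ws \<subseteq> \<Delta> \<Longrightarrow> word_prod ws \<in> weyl \<Delta>"
  by (auto simp: weyl_def)

lemma weylE:
  assumes "w \<in> weyl \<Delta>"
  obtains ws where "set ws \<subseteq> \<Delta>" "word_prod ws = w"
  using assms by (auto simp: weyl_def)

lemma weyl_comp: "u \<in> weyl \<Delta> \<Longrightarrow> v \<in> weyl \<Delta> \<Longrightarrow> u \<circ> v \<in> weyl \<Delta>"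
  by (metis weylE word_prod_append word_prod_in_weyl set_append Un_subset_iff)

lemma srefl_simple_in_weyl: "\<alpha> \<in> \<Delta> \<Longrightarrow> srefl \<alpha> \<in> weyl \<Delta>"
  using word_prod_in_weyl[of "[\<alpha>]"] by simp

lemma weyl_inverse:
  assumes "w \<in> weyl \<Delta>"
  obtains w' where "w' \<in> weyl \<Delta>" "\<And>v. w' (w v) = v" "\<And>v. w (w' v) = v"
  by (metis assms weylE set_rev word_prod_in_weyl word_prod_rev_cancel word_prod_cancel_rev)

lemma orthogonal_transformation_weyl: "w \<in> weyl \<Delta> \<Longrightarrow> orthogonal_transformation w"
  by (metis weylE orthogonal_transformation_word_prod)

lemma weyl_uminus: "w \<in> weyl \<Delta> \<Longrightarrow> w (- v) = - w v"
  using orthogonal_transformation_weyl linear_neg orthogonal_transformation_linear by blast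

lemma weyl_root: "w \<in> weyl \<Delta> \<Longrightarrow> \<beta> \<in> \<Phi> \<Longrightarrow> w \<beta> \<in> \<Phi>"
  by (metis weylE word_prod_root)

lemma finite_weyl: "finite (weyl \<Delta>)"
proof -
  have "inj_on (\<lambda>f. restrict f \<Phi>) (weyl \<Delta>)"
  proof (rule inj_onI)
    fix f g assume "f \<in> weyl \<Delta>" "g \<in> weyl \<Delta>" "restrict f \<Phi> = restrict g \<Phi>"
    then have "f x = g x" for x
      using linear_eq_on_span[of f g \<Phi> x] span_roots orthogonal_transformation_weyl
        orthogonal_transformation_linear by (metis UNIV_I restrict_apply')
    then show "f = g" by blast
  qed
  moreover have "(\<lambda>f. restrict f \<Phi>) ` weyl \<Delta> \<subseteq> (\<Pi>\<^sub>E i \<in> \<Phi>. \<Phi>)"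
    using weyl_root by auto
  then have "finite ((\<lambda>f. restrict f \<Phi>) ` weyl \<Delta>)"
    using finite_roots by (meson finite_PiE finite_subset)
  ultimately show ?thesis using finite_imageD by blast
qed

lemma len_le_length: "set ws \<subseteq> \<Delta> \<Longrightarrow> \<ell> (word_prod ws) \<le> length ws"
  unfolding len_def by (rule Least_le) auto

lemma obtain_reduced_word:
  assumes "w \<in> weyl \<Delta>"
  obtains ws where "reduced_word \<Delta> ws w"
proof -
  have "\<exists>n ws. set ws \<subseteq> \<Delta> \<and> length ws = n \<and> word_prod ws = w"
    using assms by (auto simp: weyl_def)
  from LeastI_ex[OF this] show ?thesis
    using that unfolding len_def reduced_word_def by blast
qed

lemma len_srefl_left_le:
  assumes "\<alpha> \<in> \<Delta>" "w \<in> weyl \<Delta>"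
  shows "\<ell> (srefl \<alpha> \<circ> w) \<le> Suc (\<ell> w)"
proof -
  obtain ws where "reduced_word \<Delta> ws w" using obtain_reduced_word assms(2) by blast
  then show ?thesis using len_le_length[of "\<alpha> # ws"] assms(1) by (auto simp: reduced_word_def)
qed

lemma strong_exchange:
  assumes "set ws \<subseteq> \<Delta>" "\<beta> \<in> Pos" "- word_prod ws \<beta> \<in> Pos"
  obtains i where "i < length ws" "word_prod ws \<circ> srefl \<beta> = word_prod (take i ws @ drop (Suc i) ws)"
  using assms
proof (induction ws arbitrary: thesis)
  case Nil
  then show ?case using not_pos_and_neg pos_roots_subset by auto
next
  case (Cons \<alpha> ws)
  have \<alpha>: "\<alpha> \<in> \<Delta>" and ws: "set ws \<subseteq> \<Delta>" using Cons.prems by auto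
  define \<gamma> where "\<gamma> = word_prod ws \<beta>"
  have \<gamma>_root: "\<gamma> \<in> \<Phi>" using word_prod_root ws Cons.prems(3) pos_roots_subset \<gamma>_def by blast
  show ?case
  proof (cases "- \<gamma> \<in> Pos")
    case True
    then obtain i where i: "i < length ws"
      "word_prod ws \<circ> srefl \<beta> = word_prod (take i ws @ drop (Suc i) ws)"
      using Cons.IH ws Cons.prems(3) \<gamma>_def by blast
    have "word_prod (\<alpha> # ws) \<circ> srefl \<beta> = srefl \<alpha> \<circ> (word_prod ws \<circ> srefl \<beta>)"
      by (simp add: comp_assoc)
    also have "\<dots> = word_prod (take (Suc i) (\<alpha> # ws) @ drop (Suc (Suc i)) (\<alpha> # ws))"
      by (simp only: i(2)) simp
    finally show ?thesis using Cons.prems(1) i(1) by (metis Suc_less_eq length_Cons)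
  next
    case False
    then have "\<gamma> \<in> Pos" using root_pos_or_neg \<gamma>_root by blast
    moreover have "- srefl \<alpha> \<gamma> \<in> Pos" using Cons.prems(4) \<gamma>_def by simp
    moreover have "srefl \<alpha> \<gamma> \<in> \<Phi>" using srefl_root \<alpha> simple_roots \<gamma>_root by blast
    ultimately have "\<gamma> = \<alpha>" using srefl_simple_pos[OF \<alpha>] not_pos_and_neg by blast
    then have "word_prod ws \<circ> srefl \<beta> = srefl \<alpha> \<circ> word_prod ws"
      using srefl_conjugate[OF orthogonal_transformation_word_prod, of ws \<beta>] \<gamma>_def by simp
    then have "word_prod (\<alpha> # ws) \<circ> srefl \<beta> = word_prod (take 0 (\<alpha> # ws) @ drop (Suc 0) (\<alpha> # ws))"
      using srefl_comp_srefl[OF simple_nonzero[OF \<alpha>]] by (simp add: comp_assoc)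
    then show ?thesis using Cons.prems(1) by (metis length_Cons zero_less_Suc)
  qed
qed

lemma len_srefl_less:
  assumes w: "w \<in> weyl \<Delta>" and \<beta>: "\<beta> \<in> Pos" and neg: "- w \<beta> \<in> Pos"
  shows "w \<circ> srefl \<beta> \<in> weyl \<Delta>" "\<ell> (w \<circ> srefl \<beta>) < \<ell> w"
proof -
  obtain ws where ws: "reduced_word \<Delta> ws w" using obtain_reduced_word w by blast
  then have set_ws: "set ws \<subseteq> \<Delta>" by (simp add: reduced_word_def)
  obtain i where i: "i < length ws" "w \<circ> srefl \<beta> = word_prod (take i ws @ drop (Suc i) ws)"
    using strong_exchange[OF set_ws \<beta>] neg ws by (auto simp: reduced_word_def)
  have del: "set (take i ws @ drop (Suc i) ws) \<subseteq> \<Delta>"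
    using set_ws by (auto dest: in_set_takeD in_set_dropD)
  show "w \<circ> srefl \<beta> \<in> weyl \<Delta>" using word_prod_in_weyl[OF del] i(2) by simp
  have "\<ell> (w \<circ> srefl \<beta>) \<le> length (take i ws @ drop (Suc i) ws)"
    unfolding i(2) by (rule len_le_length[OF del])
  also have "\<dots> < length ws" using i(1) by simp
  finally show "\<ell> (w \<circ> srefl \<beta>) < \<ell> w" using ws by (simp add: reduced_word_def)
qed

lemma nonneg_comb_sum:
  assumes "finite A" "\<forall>i\<in>A. k i \<ge> 0" "\<forall>i\<in>A. nonneg_comb \<Delta> (f i)"
  shows "nonneg_comb \<Delta> (\<Sum>i\<in>A. k i *\<^sub>R f i)"
  using assms
proof (induction A rule: finite_induct)
  case empty
  show ?case unfolding nonneg_comb_def by (rule exI[of _ "\<lambda>_. 0"]) simp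
next
  case (insert x A)
  obtain c where c: "\<forall>\<alpha>\<in>\<Delta>. c \<alpha> \<ge> 0" "f x = (\<Sum>\<alpha>\<in>\<Delta>. c \<alpha> *\<^sub>R \<alpha>)"
    using insert.prems by (auto simp: nonneg_comb_def)
  obtain d where d: "\<forall>\<alpha>\<in>\<Delta>. d \<alpha> \<ge> 0" "(\<Sum>i\<in>A. k i *\<^sub>R f i) = (\<Sum>\<alpha>\<in>\<Delta>. d \<alpha> *\<^sub>R \<alpha>)"
    using insert by (auto simp: nonneg_comb_def)
  have "(\<Sum>i\<in>insert x A. k i *\<^sub>R f i) = (\<Sum>\<alpha>\<in>\<Delta>. (k x * c \<alpha> + d \<alpha>) *\<^sub>R \<alpha>)"
    using insert.hyps c(2) d(2) by (simp add: scaleR_sum_right sum.distrib scaleR_add_left)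
  then show ?case unfolding nonneg_comb_def
    using c(1) d(1) insert.prems by (intro exI[of _ "\<lambda>\<alpha>. k x * c \<alpha> + d \<alpha>"]) auto
qed

text \<open>An element of maximal length makes every simple root, hence every positive root, negative.\<close>
lemma longest_element:
  obtains w\<^sub>0 where "w\<^sub>0 \<in> weyl \<Delta>" "\<And>\<beta>. \<beta> \<in> Pos \<Longrightarrow> - w\<^sub>0 \<beta> \<in> Pos"
proof -
  have "finite (\<ell> ` weyl \<Delta>)" "id \<in> weyl \<Delta>"
    using finite_weyl word_prod_in_weyl[of "[]"] by auto
  then obtain w\<^sub>0 where w\<^sub>0: "w\<^sub>0 \<in> weyl \<Delta>" and max: "\<And>u. u \<in> weyl \<Delta> \<Longrightarrow> \<ell> u \<le> \<ell> w\<^sub>0"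
    by (metis (no_types, lifting) Max_ge Max_in empty_iff image_iff)
  have simple_neg: "nonneg_comb \<Delta> (- w\<^sub>0 \<alpha>)" if \<alpha>: "\<alpha> \<in> \<Delta>" for \<alpha>
  proof (rule ccontr)
    assume "\<not> nonneg_comb \<Delta> (- w\<^sub>0 \<alpha>)"
    then have "w\<^sub>0 \<alpha> \<in> Pos"
      using root_pos_or_neg weyl_root[OF w\<^sub>0] \<alpha> simple_roots by (auto simp: pos_roots_def)
    then have "\<ell> (w\<^sub>0 \<circ> srefl \<alpha> \<circ> srefl \<alpha>) < \<ell> (w\<^sub>0 \<circ> srefl \<alpha>)"
      using len_srefl_less[of "w\<^sub>0 \<circ> srefl \<alpha>" \<alpha>] weyl_comp[OF w\<^sub>0 srefl_simple_in_weyl[OF \<alpha>]]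
        simple_pos[OF \<alpha>] srefl_self[OF simple_nonzero[OF \<alpha>]] weyl_uminus[OF w\<^sub>0] by simp
    then have "\<ell> w\<^sub>0 < \<ell> (w\<^sub>0 \<circ> srefl \<alpha>)"
      by (simp add: comp_srefl_srefl simple_nonzero[OF \<alpha>])
    then show False using max[OF weyl_comp[OF w\<^sub>0 srefl_simple_in_weyl[OF \<alpha>]]] by linarith
  qed
  have "- w\<^sub>0 \<beta> \<in> Pos" if \<beta>: "\<beta> \<in> Pos" for \<beta>
  proof -
    obtain c where c: "\<forall>\<gamma>\<in>\<Delta>. c \<gamma> \<ge> 0" "\<beta> = (\<Sum>\<gamma>\<in>\<Delta>. c \<gamma> *\<^sub>R \<gamma>)"
      using \<beta> by (auto simp: pos_roots_def nonneg_comb_def)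
    have l: "linear w\<^sub>0" using w\<^sub>0 orthogonal_transformation_weyl orthogonal_transformation_linear by blast
    have "- w\<^sub>0 \<beta> = (\<Sum>\<gamma>\<in>\<Delta>. c \<gamma> *\<^sub>R (- w\<^sub>0 \<gamma>))"
      unfolding c(2) by (simp add: linear_sum[OF l] linear_cmul[OF l] sum_negf)
    moreover have "nonneg_comb \<Delta> (\<Sum>\<gamma>\<in>\<Delta>. c \<gamma> *\<^sub>R (- w\<^sub>0 \<gamma>))"
      using c(1) simple_neg by (intro nonneg_comb_sum[OF finite_simple]) auto
    ultimately have "nonneg_comb \<Delta> (- w\<^sub>0 \<beta>)" by (simp only:)
    moreover have "- w\<^sub>0 \<beta> \<in> \<Phi>" using uminus_root weyl_root[OF w\<^sub>0] \<beta> pos_roots_subset by blast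
    ultimately show ?thesis by (simp add: pos_roots_def)
  qed
  then show ?thesis using that w\<^sub>0 by blast
qed

lemma srefl_in_weyl:
  assumes "\<beta> \<in> \<Phi>"
  shows "srefl \<beta> \<in> weyl \<Delta>"
proof -
  obtain \<beta>' where \<beta>': "\<beta>' \<in> Pos" "srefl \<beta> = srefl \<beta>'"
    using root_pos_or_neg[OF assms] srefl_uminus by metis
  obtain w\<^sub>0 where w\<^sub>0: "w\<^sub>0 \<in> weyl \<Delta>" "\<And>\<beta>. \<beta> \<in> Pos \<Longrightarrow> - w\<^sub>0 \<beta> \<in> Pos"
    using longest_element by blast
  obtain w' where w': "w' \<in> weyl \<Delta>" "\<And>v. w' (w\<^sub>0 v) = v" using weyl_inverse[OF w\<^sub>0(1)] by metis
  have "w' \<circ> (w\<^sub>0 \<circ> srefl \<beta>') = srefl \<beta>'" using w'(2) by (simp add: fun_eq_iff)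
  then show ?thesis
    using weyl_comp[OF w'(1) len_srefl_less(1)[OF w\<^sub>0(1) \<beta>'(1) w\<^sub>0(2)[OF \<beta>'(1)]]] \<beta>'(2) by simp
qed

lemma len_srefl_greater:
  assumes w: "w \<in> weyl \<Delta>" and \<beta>: "\<beta> \<in> Pos" and pos: "w \<beta> \<in> Pos"
  shows "\<ell> w < \<ell> (w \<circ> srefl \<beta>)"
proof -
  have \<beta>_nz: "\<beta> \<noteq> 0" using \<beta> pos_roots_subset root_nonzero by blast
  have "- (w \<circ> srefl \<beta>) \<beta> \<in> Pos"
    using pos srefl_self[OF \<beta>_nz] weyl_uminus[OF w] by simp
  then have "\<ell> (w \<circ> srefl \<beta> \<circ> srefl \<beta>) < \<ell> (w \<circ> srefl \<beta>)"
    using len_srefl_less(2) weyl_comp[OF w srefl_in_weyl] \<beta> pos_roots_subset by blast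
  then show ?thesis by (simp add: comp_srefl_srefl[OF \<beta>_nz])
qed

lemma len_srefl_neq:
  assumes w: "w \<in> weyl \<Delta>" and \<gamma>: "\<gamma> \<in> \<Phi>"
  shows "\<ell> (w \<circ> srefl \<gamma>) \<noteq> \<ell> w"
proof -
  obtain \<beta> where \<beta>: "\<beta> \<in> Pos" "srefl \<gamma> = srefl \<beta>"
    using root_pos_or_neg[OF \<gamma>] srefl_uminus by metis
  then have "w \<beta> \<in> Pos \<or> - w \<beta> \<in> Pos"
    using root_pos_or_neg weyl_root[OF w] pos_roots_subset by blast
  then show ?thesis using len_srefl_greater[OF w \<beta>(1)] len_srefl_less(2)[OF w \<beta>(1)] \<beta>(2) by force
qed

lemma srefl_left_eq_right:
  assumes w: "w \<in> weyl \<Delta>" and \<gamma>: "\<gamma> \<in> \<Phi>"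
  obtains \<delta> where "\<delta> \<in> \<Phi>" "srefl \<gamma> \<circ> w = w \<circ> srefl \<delta>"
proof -
  obtain w' where w': "w' \<in> weyl \<Delta>" "\<And>v. w (w' v) = v" using weyl_inverse[OF w] by metis
  have "srefl \<gamma> \<circ> w = w \<circ> srefl (w' \<gamma>)"
    using srefl_conjugate[OF orthogonal_transformation_weyl[OF w], of "w' \<gamma>"] w'(2) by simp
  then show ?thesis using that weyl_root[OF w'(1) \<gamma>] by blast
qed

lemma len_srefl_left_cases:
  assumes \<alpha>: "\<alpha> \<in> \<Delta>" and w: "w \<in> weyl \<Delta>"
  shows "\<ell> (srefl \<alpha> \<circ> w) = Suc (\<ell> w) \<or> \<ell> w = Suc (\<ell> (srefl \<alpha> \<circ> w))"
proof -
  have "\<ell> (srefl \<alpha> \<circ> w) \<noteq> \<ell> w"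
    using srefl_left_eq_right[OF w] len_srefl_neq[OF w] \<alpha> simple_roots by (metis subsetD)
  moreover have "\<ell> w \<le> Suc (\<ell> (srefl \<alpha> \<circ> w))"
    using len_srefl_left_le[OF \<alpha> weyl_comp[OF srefl_simple_in_weyl[OF \<alpha>] w]]
    by (simp add: srefl_comp_srefl simple_nonzero[OF \<alpha>])
  ultimately show ?thesis using len_srefl_left_le[OF \<alpha> w] by linarith
qed

abbreviation bruhat_leq (infix "\<le>\<^sub>B" 50) where "x \<le>\<^sub>B y \<equiv> bruhat_le \<Phi> \<Delta> x y"

lemma bruhat_le_D:
  "x \<le>\<^sub>B y \<Longrightarrow> x \<in> weyl \<Delta> \<and> y \<in> weyl \<Delta> \<and> \<ell> x \<le> \<ell> y \<and> (x \<noteq> y \<longrightarrow> \<ell> x < \<ell> y)"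
proof (induction rule: bruhat_le.induct)
  case (bruhat_step x y \<beta>)
  have "y \<circ> srefl \<beta> \<in> weyl \<Delta>"
    using bruhat_step weyl_comp srefl_in_weyl pos_roots_subset by blast
  then show ?case using bruhat_step.IH bruhat_step.hyps(3) by (meson le_less_trans less_imp_le)
qed simp

lemma bruhat_le_trans:
  assumes "x \<le>\<^sub>B y" "y \<le>\<^sub>B z"
  shows "x \<le>\<^sub>B z"
  using assms(2,1) by (induction rule: bruhat_le.induct) (auto intro: bruhat_le.intros)

lemma bruhat_le_srefl_right:
  assumes u: "u \<in> weyl \<Delta>" and \<gamma>: "\<gamma> \<in> \<Phi>" and less: "\<ell> u < \<ell> (u \<circ> srefl \<gamma>)"
  shows "u \<le>\<^sub>B u \<circ> srefl \<gamma>"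
proof -
  obtain \<beta> where "\<beta> \<in> Pos" "srefl \<gamma> = srefl \<beta>"
    using root_pos_or_neg[OF \<gamma>] srefl_uminus by metis
  then show ?thesis using bruhat_step[OF bruhat_refl[OF u]] less by simp
qed

lemma bruhat_le_srefl_left:
  assumes u: "u \<in> weyl \<Delta>" and \<gamma>: "\<gamma> \<in> \<Phi>" and less: "\<ell> u < \<ell> (srefl \<gamma> \<circ> u)"
  shows "u \<le>\<^sub>B srefl \<gamma> \<circ> u"
  using srefl_left_eq_right[OF u \<gamma>] bruhat_le_srefl_right[OF u] less by metis

lemma bruhat_less_srefl_iff:
  assumes v: "v \<in> weyl \<Delta>" and \<beta>: "\<beta> \<in> Pos"
  shows "bruhat_less \<Phi> \<Delta> (v \<circ> srefl \<beta>) v \<longleftrightarrow> - v \<beta> \<in> Pos"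
proof
  assume "bruhat_less \<Phi> \<Delta> (v \<circ> srefl \<beta>) v"
  then have "\<ell> (v \<circ> srefl \<beta>) < \<ell> v" using bruhat_le_D unfolding bruhat_less_def by blast
  then show "- v \<beta> \<in> Pos"
    using len_srefl_greater[OF v \<beta>] root_pos_or_neg weyl_root[OF v] \<beta> pos_roots_subset
    by (meson not_less_iff_gr_or_eq subsetD)
next
  have \<beta>_nz: "\<beta> \<noteq> 0" using \<beta> pos_roots_subset root_nonzero by blast
  assume "- v \<beta> \<in> Pos"
  then have vs: "v \<circ> srefl \<beta> \<in> weyl \<Delta>" and less: "\<ell> (v \<circ> srefl \<beta>) < \<ell> v"
    using len_srefl_less[OF v \<beta>] by blast+
  have "v \<circ> srefl \<beta> \<le>\<^sub>B v \<circ> srefl \<beta> \<circ> srefl \<beta>"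
    using bruhat_le_srefl_right[OF vs, of \<beta>] less \<beta> pos_roots_subset
    unfolding comp_srefl_srefl[OF \<beta>_nz] by blast
  then show "bruhat_less \<Phi> \<Delta> (v \<circ> srefl \<beta>) v"
    using less unfolding bruhat_less_def comp_srefl_srefl[OF \<beta>_nz] by auto
qed

lemma bruhat_le_delete_letter:
  assumes vs: "set vs \<subseteq> \<Delta>" "\<ell> (word_prod vs) = length vs" and j: "j < length vs"
  shows "word_prod (take j vs @ drop (Suc j) vs) \<le>\<^sub>B word_prod vs"
proof -
  define v where "v = word_prod (take j vs @ drop (Suc j) vs)"
  define \<gamma> where "\<gamma> = word_prod (rev (drop (Suc j) vs)) (vs ! j)"
  have del: "set (take j vs @ drop (Suc j) vs) \<subseteq> \<Delta>"
    using vs(1) by (auto dest: in_set_takeD in_set_dropD)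
  have "word_prod vs = v \<circ> srefl \<gamma>"
    using word_prod_insert[of "drop (Suc j) vs" "vs ! j" "take j vs"]
      word_prod_cancel_rev vs(1) j id_take_nth_drop[OF j] set_drop_subset
    unfolding v_def \<gamma>_def by (metis order_trans)
  moreover have "\<gamma> \<in> \<Phi>"
    unfolding \<gamma>_def using vs(1) j simple_roots nth_mem
    by (intro word_prod_root) (auto dest: in_set_dropD)
  moreover have "\<ell> v < length vs"
    using len_le_length[OF del] j unfolding v_def by simp
  ultimately show ?thesis
    using bruhat_le_srefl_right[of v \<gamma>] word_prod_in_weyl[OF del] vs(2) unfolding v_def by simp
qed

text \<open>The heart of the lifting property: if \<open>y < y s\<^sub>\<beta>\<close> and \<open>s\<^sub>\<alpha>\<close> shortens \<open>y s\<^sub>\<beta>\<close> but lengthens \<open>y\<close>,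
  strong exchange applied to a reduced word of \<open>y s\<^sub>\<beta>\<close> starting with \<open>\<alpha>\<close> deletes either that
  first letter or a letter of the rest.\<close>
lemma lifting_step:
  assumes \<alpha>: "\<alpha> \<in> \<Delta>" and y: "y \<in> weyl \<Delta>" and \<beta>: "\<beta> \<in> Pos"
    and up: "\<ell> y < \<ell> (y \<circ> srefl \<beta>)" and left_down: "\<ell> (srefl \<alpha> \<circ> (y \<circ> srefl \<beta>)) < \<ell> (y \<circ> srefl \<beta>)"
    and left_up: "\<ell> y < \<ell> (srefl \<alpha> \<circ> y)"
  shows "y = srefl \<alpha> \<circ> (y \<circ> srefl \<beta>) \<or> srefl \<alpha> \<circ> y \<le>\<^sub>B srefl \<alpha> \<circ> (y \<circ> srefl \<beta>)"
proof -
  define s where "s = srefl \<alpha>"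
  define u where "u = y \<circ> srefl \<beta>"
  have \<beta>_nz: "\<beta> \<noteq> 0" using \<beta> pos_roots_subset root_nonzero by blast
  have s_s: "s \<circ> (s \<circ> f) = f" for f unfolding s_def by (simp add: srefl_comp_srefl simple_nonzero[OF \<alpha>])
  have u: "u \<in> weyl \<Delta>" unfolding u_def using weyl_comp[OF y srefl_in_weyl] \<beta> pos_roots_subset by blast
  obtain vs where vs: "reduced_word \<Delta> vs (s \<circ> u)"
    using obtain_reduced_word weyl_comp[OF srefl_simple_in_weyl[OF \<alpha>] u] unfolding s_def by blast
  have \<alpha>vs: "set (\<alpha> # vs) \<subseteq> \<Delta>" "word_prod (\<alpha> # vs) = u"
    using vs \<alpha> s_s unfolding reduced_word_def s_def by auto
  have "\<ell> u = Suc (length vs)"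
    using len_srefl_left_cases[OF \<alpha> u] left_down vs unfolding reduced_word_def s_def u_def by auto
  have "- u \<beta> \<in> Pos"
    using len_srefl_greater[OF u \<beta>] root_pos_or_neg weyl_root[OF u] \<beta> pos_roots_subset up
    unfolding u_def by (metis comp_srefl_srefl[OF \<beta>_nz] not_less_iff_gr_or_eq subsetD)
  then obtain i where i: "i < length (\<alpha> # vs)" "y = word_prod (take i (\<alpha> # vs) @ drop (Suc i) (\<alpha> # vs))"
    using strong_exchange[OF \<alpha>vs(1) \<beta>] \<alpha>vs(2) unfolding u_def by (metis comp_srefl_srefl[OF \<beta>_nz])
  show ?thesis
  proof (cases i)
    case 0
    then show ?thesis using i(2) vs unfolding reduced_word_def s_def u_def by simp
  next
    case (Suc j)
    then have "s \<circ> y = word_prod (take j vs @ drop (Suc j) vs)"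
      using i(2) s_s unfolding s_def by simp
    moreover have "word_prod (take j vs @ drop (Suc j) vs) \<le>\<^sub>B s \<circ> u"
      using bruhat_le_delete_letter[of vs j] vs i(1) Suc unfolding reduced_word_def by auto
    ultimately show ?thesis unfolding s_def u_def by simp
  qed
qed

lemma bruhat_lifting:
  assumes \<alpha>: "\<alpha> \<in> \<Delta>"
  shows "x \<le>\<^sub>B u \<Longrightarrow> \<ell> x < \<ell> (srefl \<alpha> \<circ> x) \<Longrightarrow> \<ell> (srefl \<alpha> \<circ> u) < \<ell> u \<Longrightarrow> x \<le>\<^sub>B srefl \<alpha> \<circ> u"
proof (induction rule: bruhat_le.induct)
  case (bruhat_refl x)
  then show ?case by simp
next
  case (bruhat_step x y \<beta>)
  have y: "y \<in> weyl \<Delta>" using bruhat_le_D[OF bruhat_step.hyps(1)] by blast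
  have sy: "srefl \<alpha> \<circ> y \<in> weyl \<Delta>" using weyl_comp[OF srefl_simple_in_weyl[OF \<alpha>] y] .
  have yu: "\<ell> y < \<ell> (y \<circ> srefl \<beta>)" by (fact bruhat_step.hyps(3))
  consider "\<ell> y = Suc (\<ell> (srefl \<alpha> \<circ> y))" | "\<ell> y < \<ell> (srefl \<alpha> \<circ> y)"
    using len_srefl_left_cases[OF \<alpha> y] by force
  then show ?case
  proof cases
    case 1
    have "\<ell> (srefl \<alpha> \<circ> y) < \<ell> (srefl \<alpha> \<circ> y \<circ> srefl \<beta>)"
      using 1 yu bruhat_step.prems(2) len_srefl_left_cases[OF \<alpha> weyl_comp[OF y srefl_in_weyl]]
        \<open>\<beta> \<in> Pos\<close> pos_roots_subset by (fastforce simp: comp_assoc)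
    then have "srefl \<alpha> \<circ> y \<le>\<^sub>B srefl \<alpha> \<circ> y \<circ> srefl \<beta>"
      using bruhat_le_srefl_right[OF sy] \<open>\<beta> \<in> Pos\<close> pos_roots_subset by blast
    moreover have "x \<le>\<^sub>B srefl \<alpha> \<circ> y"
      by (rule bruhat_step.IH[OF bruhat_step.prems(1)]) (unfold 1, rule lessI)
    ultimately show ?thesis by (metis bruhat_le_trans comp_assoc)
  next
    case 2
    have "y \<le>\<^sub>B srefl \<alpha> \<circ> y" using bruhat_le_srefl_left[OF y] 2 \<alpha> simple_roots by blast
    then show ?thesis
      using lifting_step[OF \<alpha> y \<open>\<beta> \<in> Pos\<close> yu bruhat_step.prems(2) 2] bruhat_step.hyps(1)
        bruhat_le_trans by metis
  qed
qed

lemma bruhat_le_srefl_left_iff: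
  assumes \<alpha>: "\<alpha> \<in> \<Delta>" and x: "\<ell> x < \<ell> (srefl \<alpha> \<circ> x)" and u: "u \<in> weyl \<Delta>"
  shows "x \<le>\<^sub>B srefl \<alpha> \<circ> u \<longleftrightarrow> x \<le>\<^sub>B u"
proof -
  have s_s: "srefl \<alpha> \<circ> (srefl \<alpha> \<circ> u) = u" by (simp add: srefl_comp_srefl simple_nonzero[OF \<alpha>])
  have su: "srefl \<alpha> \<circ> u \<in> weyl \<Delta>" using weyl_comp[OF srefl_simple_in_weyl[OF \<alpha>] u] .
  consider "\<ell> u = Suc (\<ell> (srefl \<alpha> \<circ> u))" | "\<ell> (srefl \<alpha> \<circ> u) = Suc (\<ell> u)"
    using len_srefl_left_cases[OF \<alpha> u] by blast
  then show ?thesis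
  proof cases
    case 1
    then have "srefl \<alpha> \<circ> u \<le>\<^sub>B u"
      using bruhat_le_srefl_left[OF su, of \<alpha>] \<alpha> simple_roots s_s by auto
    then show ?thesis using bruhat_lifting[OF \<alpha> _ x] bruhat_le_trans 1 by auto
  next
    case 2
    then have "u \<le>\<^sub>B srefl \<alpha> \<circ> u" using bruhat_le_srefl_left[OF u, of \<alpha>] \<alpha> simple_roots by auto
    then show ?thesis using bruhat_lifting[OF \<alpha> _ x, of "srefl \<alpha> \<circ> u"] bruhat_le_trans 2 s_s by auto
  qed
qed

lemma chain_label_len:
  assumes "\<ell> (word_prod ws) = length ws" "chain_label \<Phi> \<Delta> x ws C L" "j \<le> length L"
  shows "\<ell> (C ! j) + j = length ws"
  using assms(3)
proof (induction j)
  case 0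
  then show ?case using assms(1,2) by (simp add: chain_label_def)
next
  case (Suc j)
  have "bruhat_cover \<Phi> \<Delta> (C ! Suc j) (C ! j)"
    using assms(2) Suc.prems unfolding chain_label_def by (meson Suc_le_lessD)
  then show ?case using Suc by (simp add: bruhat_cover_def)
qed

lemma reduced_word_Cons:
  assumes "reduced_word \<Delta> (\<alpha> # ws) w"
  shows "reduced_word \<Delta> ws (srefl \<alpha> \<circ> w)"
proof -
  have \<alpha>: "\<alpha> \<in> \<Delta>" and ws: "set ws \<subseteq> \<Delta>" and w: "w = srefl \<alpha> \<circ> word_prod ws"
    and len_w: "\<ell> w = Suc (length ws)"
    using assms by (auto simp: reduced_word_def)
  have "\<ell> w \<le> Suc (\<ell> (word_prod ws))"
    unfolding w by (rule len_srefl_left_le[OF \<alpha> word_prod_in_weyl[OF ws]])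
  then have "\<ell> (word_prod ws) = length ws" using len_le_length[OF ws] len_w by simp
  then show ?thesis
    using ws w by (simp add: reduced_word_def srefl_comp_srefl simple_nonzero[OF \<alpha>])
qed

lemma chain_label_drop_first_len:
  assumes red: "reduced_word \<Delta> (\<alpha> # ws) w" and C: "chain_label \<Phi> \<Delta> x (\<alpha> # ws) C (L @ [1])"
    and j: "j \<le> length L"
  defines "d \<equiv> word_prod (del_pos ws (set (take j (map (\<lambda>i. i - 1) L))))"
  shows "\<ell> d + j = length ws" "\<ell> d < \<ell> (srefl \<alpha> \<circ> d)"
proof -
  note L' = chain_label_Cons_label[OF C]
  have \<alpha>: "\<alpha> \<in> \<Delta>" and ws: "set ws \<subseteq> \<Delta>" using red by (auto simp: reduced_word_def)
  have "length L \<le> length ws"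
    using distinct_card[OF L'(1)] card_mono[OF finite_atLeastAtMost L'(2)] by simp
  moreover have "set (take j (map (\<lambda>i. i - 1) L)) \<subseteq> {1..length ws}"
    using set_take_subset L'(2) by (rule order_trans)
  then have "length (del_pos ws (set (take j (map (\<lambda>i. i - 1) L)))) = length ws - j"
    using length_del_pos_distinct[of "take j (map (\<lambda>i. i - 1) L)" ws] L'(1) j by simp
  then have "\<ell> d \<le> length ws - j"
    unfolding d_def using len_le_length set_del_pos_subset ws by (metis order_trans)
  moreover have "\<ell> (srefl \<alpha> \<circ> d) \<le> Suc (\<ell> d)"
    unfolding d_def using len_srefl_left_le[OF \<alpha>] word_prod_in_weyl set_del_pos_subset ws
    by (meson order_trans)
  moreover have "\<ell> (srefl \<alpha> \<circ> d) + j = Suc (length ws)"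
    using chain_label_len[OF _ C, of j] chain_label_Cons_nth[OF C j] red j
    unfolding d_def by (simp add: reduced_word_def)
  ultimately show "\<ell> d + j = length ws" "\<ell> d < \<ell> (srefl \<alpha> \<circ> d)"
    using j by linarith+
qed

text \<open>Each element but the last of the chain of \<open>s\<^sub>\<alpha> w'\<close> is \<open>s\<^sub>\<alpha> d\<close> with \<open>d < s\<^sub>\<alpha> d\<close>, and property Z
  turns the covers \<open>s\<^sub>\<alpha> d' < s\<^sub>\<alpha> d\<close> into covers \<open>d' < d\<close>.\<close>
lemma chain_label_drop_first:
  assumes red: "reduced_word \<Delta> (\<alpha> # ws) w" and C: "chain_label \<Phi> \<Delta> x (\<alpha> # ws) C (L @ [1])"
  shows "chain_label \<Phi> \<Delta> x ws (map (\<lambda>j. word_prod (del_pos ws (set (take j (map (\<lambda>i. i - 1) L)))))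
      [0..<Suc (length L)]) (map (\<lambda>i. i - 1) L)" (is "chain_label _ _ _ _ (map ?D _) ?L'")
    and "bruhat_cover \<Phi> \<Delta> x (srefl \<alpha> \<circ> x)"
proof -
  let ?s = "srefl \<alpha>"
  have \<alpha>: "\<alpha> \<in> \<Delta>" and ws: "set ws \<subseteq> \<Delta>" using red by (auto simp: reduced_word_def)
  note len_D = chain_label_drop_first_len(1)[OF red C] and D_up = chain_label_drop_first_len(2)[OF red C]
  have D_weyl: "?D j \<in> weyl \<Delta>" for j
    using word_prod_in_weyl set_del_pos_subset ws by (meson order_trans)
  have C_D: "C ! j = ?s \<circ> ?D j" if "j \<le> length L" for j
    using chain_label_Cons_nth[OF C that] .
  have C_cover: "bruhat_cover \<Phi> \<Delta> (C ! Suc k) (C ! k)" if "k < Suc (length L)" for k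
    using C that unfolding chain_label_def length_append_singleton by blast
  have cover: "bruhat_cover \<Phi> \<Delta> (?D (Suc j)) (?D j)" if j: "j < length L" for j
  proof -
    have "C ! Suc j \<le>\<^sub>B C ! j"
      using C_cover[of j] j unfolding bruhat_cover_def bruhat_less_def by simp
    then have "?s \<circ> ?D (Suc j) \<le>\<^sub>B ?s \<circ> ?D j"
      unfolding C_D[OF Suc_leI[OF j]] C_D[OF less_imp_le[OF j]] .
    moreover have "?D (Suc j) \<le>\<^sub>B ?s \<circ> ?D (Suc j)"
      using \<alpha> simple_roots D_up[OF Suc_leI[OF j]] by (intro bruhat_le_srefl_left[OF D_weyl]) auto
    ultimately have "?D (Suc j) \<le>\<^sub>B ?s \<circ> ?D j" by (rule bruhat_le_trans[rotated])
    then have "?D (Suc j) \<le>\<^sub>B ?D j"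
      using bruhat_le_srefl_left_iff[OF \<alpha> D_up[OF Suc_leI[OF j]] D_weyl] by simp
    then show ?thesis
      using len_D[of j] len_D[of "Suc j"] j unfolding bruhat_cover_def bruhat_less_def by auto
  qed
  have x: "x = ?D (length L)" using chain_label_Cons_last[OF C] by simp
  have nth_D: "map ?D [0..<Suc (length L)] ! j = ?D j" if "j \<le> length L" for j
    using that by (simp del: upt_Suc add: nth_map_upt)
  show "chain_label \<Phi> \<Delta> x ws (map ?D [0..<Suc (length L)]) ?L'"
    unfolding chain_label_def
  proof (intro conjI allI impI)
    show "map ?D [0..<Suc (length L)] ! 0 = word_prod ws" using nth_D[of 0] by (simp add: del_pos_empty)
    show "last (map ?D [0..<Suc (length L)]) = x" using x by simp
    show "bruhat_cover \<Phi> \<Delta> (map ?D [0..<Suc (length L)] ! Suc k) (map ?D [0..<Suc (length L)] ! k)"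
      if "k < length ?L'" for k
      using cover nth_D that by simp
  qed (use chain_label_Cons_label[OF C] nth_D in simp_all)
  show "bruhat_cover \<Phi> \<Delta> x (?s \<circ> x)"
    using C_cover[of "length L"] C_D[of "length L"] x
      chain_label_nth[OF C, of "Suc (length L)"] chain_label_last[OF C] by simp
qed

lemma lam_set_drop_first:
  assumes \<alpha>: "\<alpha> \<in> \<Delta>" and ws: "set ws \<subseteq> \<Delta>" and x: "\<ell> x < \<ell> (srefl \<alpha> \<circ> x)"
  shows "lam_set \<Phi> \<Delta> x ws = {j. Suc j \<in> lam_set \<Phi> \<Delta> x (\<alpha> # ws)} - {0}"
proof (intro set_eqI iffI)
  have iff: "x \<le>\<^sub>B word_prod (del_pos ws {j}) \<longleftrightarrow> x \<le>\<^sub>B word_prod (del_pos (\<alpha> # ws) {Suc j})"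
    if "j \<noteq> 0" for j
  proof -
    have "set (del_pos ws {j}) \<subseteq> \<Delta>" using set_del_pos_subset ws by (rule order_trans)
    then show ?thesis
      using bruhat_le_srefl_left_iff[OF \<alpha> x word_prod_in_weyl] that by (simp add: del_pos_Cons)
  qed
  fix j
  show "j \<in> lam_set \<Phi> \<Delta> x ws \<Longrightarrow> j \<in> {j. Suc j \<in> lam_set \<Phi> \<Delta> x (\<alpha> # ws)} - {0}"
    and "j \<in> {j. Suc j \<in> lam_set \<Phi> \<Delta> x (\<alpha> # ws)} - {0} \<Longrightarrow> j \<in> lam_set \<Phi> \<Delta> x ws"
    using iff[of j] by (auto simp: lam_set_def)
qed

lemma lam_drop_first:
  assumes \<alpha>: "\<alpha> \<in> \<Delta>" and ws: "set ws \<subseteq> \<Delta>" and x: "\<ell> x < \<ell> (srefl \<alpha> \<circ> x)"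
    and lam: "lam \<Phi> \<Delta> x (\<alpha> # ws) = 1 # is"
  shows "lam \<Phi> \<Delta> x ws = map (\<lambda>i. i - 1) is"
proof -
  have "finite (lam_set \<Phi> \<Delta> x (\<alpha> # ws))" by (simp add: lam_set_def)
  then have set_lam: "lam_set \<Phi> \<Delta> x (\<alpha> # ws) = insert 1 (set is)"
    using set_sorted_list_of_set lam unfolding lam_def by (metis list.set(2))
  have "sorted_wrt (<) (1 # is)"
    using strict_sorted_list_of_set lam unfolding lam_def by metis
  then have is_gt_1: "\<forall>i\<in>set is. 1 < i" and sorted_is: "sorted_wrt (<) is" by simp_all
  then have "lam_set \<Phi> \<Delta> x ws = (\<lambda>i. i - 1) ` set is"
    unfolding lam_set_drop_first[OF \<alpha> ws x] set_lam
    by (subst Suc_preimage_eq_image_pred[symmetric]) auto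
  moreover have "sorted_wrt (<) (map (\<lambda>i. i - 1) is)"
    unfolding sorted_wrt_map by (rule sorted_wrt_mono_rel[OF _ sorted_is]) (use is_gt_1 in auto)
  ultimately show ?thesis
    unfolding lam_def by (simp add: sorted_list_of_set_set_strict flip: set_map)
qed

lemma reduced_word_Cons_inversion:
  assumes red: "reduced_word \<Delta> (\<alpha> # ws) w"
  shows "word_prod (rev ws) \<alpha> \<in> Pos" "w (word_prod (rev ws) \<alpha>) = - \<alpha>"
proof -
  define \<gamma> where "\<gamma> = word_prod (rev ws) \<alpha>"
  have \<alpha>: "\<alpha> \<in> \<Delta>" and ws: "set ws \<subseteq> \<Delta>" and w: "w = srefl \<alpha> \<circ> word_prod ws"
    using red by (auto simp: reduced_word_def)
  have ws_\<gamma>: "word_prod ws \<gamma> = \<alpha>" unfolding \<gamma>_def by (rule word_prod_cancel_rev[OF ws])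
  then show "w \<gamma> = - \<alpha>" using w srefl_self[OF simple_nonzero[OF \<alpha>]] by simp
  have \<gamma>_root: "\<gamma> \<in> \<Phi>" unfolding \<gamma>_def using word_prod_root ws \<alpha> simple_roots by auto
  show "\<gamma> \<in> Pos"
  proof (rule ccontr)
    assume "\<gamma> \<notin> Pos"
    then have neg: "- \<gamma> \<in> Pos" using root_pos_or_neg \<gamma>_root by blast
    have ws_weyl: "word_prod ws \<in> weyl \<Delta>" using word_prod_in_weyl[OF ws] .
    have "word_prod ws \<circ> srefl (- \<gamma>) = w"
      using srefl_conjugate[OF orthogonal_transformation_word_prod, of ws \<gamma>] ws_\<gamma> w
      by (simp add: srefl_uminus)
    moreover have "- word_prod ws (- \<gamma>) \<in> Pos"
      using ws_\<gamma> weyl_uminus[OF ws_weyl] simple_pos[OF \<alpha>] by simp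
    ultimately have "\<ell> w < \<ell> (word_prod ws)" using len_srefl_less(2)[OF ws_weyl neg] by simp
    then show False using len_le_length[OF ws] red by (simp add: reduced_word_def)
  qed
qed

lemma uminus_srefl_simple_pos_iff:
  assumes \<alpha>: "\<alpha> \<in> \<Delta>" and \<delta>: "\<delta> \<in> \<Phi>" "\<delta> \<noteq> \<alpha>" "\<delta> \<noteq> - \<alpha>"
  shows "- srefl \<alpha> \<delta> \<in> Pos \<longleftrightarrow> - \<delta> \<in> Pos"
proof
  have root: "srefl \<alpha> \<delta> \<in> \<Phi>" using srefl_root \<alpha> simple_roots \<delta>(1) by blast
  assume "- srefl \<alpha> \<delta> \<in> Pos"
  then have "srefl \<alpha> \<delta> \<notin> Pos" using not_pos_and_neg root by blast
  then show "- \<delta> \<in> Pos"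
    using srefl_simple_pos[OF \<alpha>, of \<delta>] root_pos_or_neg[OF \<delta>(1)] \<delta>(2) by blast
next
  assume "- \<delta> \<in> Pos"
  moreover have "- \<delta> \<noteq> \<alpha>" using \<delta>(3) by auto
  ultimately show "- srefl \<alpha> \<delta> \<in> Pos"
    using srefl_simple_pos[OF \<alpha>] weyl_uminus[OF srefl_simple_in_weyl[OF \<alpha>]] by metis
qed

text \<open>Going from \<open>w\<close> to \<open>s\<^sub>\<alpha> w\<close> removes exactly the inversion \<open>\<gamma>\<close> with \<open>w \<gamma> = -\<alpha>\<close>, and by property Z
  the condition \<open>x \<le> w s\<^sub>\<beta>\<close> is unaffected.\<close>
lemma Sxw_srefl_left:
  assumes red: "reduced_word \<Delta> (\<alpha> # ws) w" and x: "\<ell> x < \<ell> (srefl \<alpha> \<circ> x)"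
  shows "Sxw \<Phi> \<Delta> x (srefl \<alpha> \<circ> w) = Sxw \<Phi> \<Delta> x w - {word_prod (rev ws) \<alpha>}"
proof (rule set_eqI)
  fix \<beta>
  define \<gamma> where "\<gamma> = word_prod (rev ws) \<alpha>"
  have \<alpha>: "\<alpha> \<in> \<Delta>" and w: "w \<in> weyl \<Delta>"
    using red word_prod_in_weyl[of "\<alpha> # ws"] by (auto simp: reduced_word_def)
  have \<gamma>: "\<gamma> \<in> Pos" "w \<gamma> = - \<alpha>" unfolding \<gamma>_def by (fact reduced_word_Cons_inversion[OF red])+
  show "\<beta> \<in> Sxw \<Phi> \<Delta> x (srefl \<alpha> \<circ> w) \<longleftrightarrow> \<beta> \<in> Sxw \<Phi> \<Delta> x w - {\<gamma>}"
  proof (cases "\<beta> \<in> Pos")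
    case False
    then show ?thesis by (simp add: Sxw_def)
  next
    case True
    have w\<beta>: "w \<beta> \<in> \<Phi>" using weyl_root[OF w] True pos_roots_subset by blast
    have "srefl \<alpha> \<circ> w \<circ> srefl \<beta> = srefl \<alpha> \<circ> (w \<circ> srefl \<beta>)" by (simp add: comp_assoc)
    then have Z: "x \<le>\<^sub>B srefl \<alpha> \<circ> w \<circ> srefl \<beta> \<longleftrightarrow> x \<le>\<^sub>B w \<circ> srefl \<beta>"
      using bruhat_le_srefl_left_iff[OF \<alpha> x weyl_comp[OF w srefl_in_weyl]] True pos_roots_subset
      by auto
    have inv: "- srefl \<alpha> (w \<beta>) \<in> Pos \<longleftrightarrow> - w \<beta> \<in> Pos \<and> \<beta> \<noteq> \<gamma>"
    proof (cases "\<beta> = \<gamma>")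
      case True
      then show ?thesis
        using \<gamma>(2) srefl_self[OF simple_nonzero[OF \<alpha>]] weyl_uminus[OF srefl_simple_in_weyl[OF \<alpha>]]
          not_pos_and_neg[of \<alpha>] simple_pos[OF \<alpha>] \<alpha> simple_roots by auto
    next
      case False
      have inj: "inj w" using orthogonal_transformation_inj orthogonal_transformation_weyl[OF w] .
      have "w \<beta> \<noteq> - \<alpha>" using False \<gamma>(2) inj by (metis injD)
      moreover have "w \<beta> \<noteq> \<alpha>"
        using \<gamma> \<open>\<beta> \<in> Pos\<close> inj weyl_uminus[OF w] not_pos_and_neg pos_roots_subset
        by (metis injD subsetD)
      ultimately show ?thesis using uminus_srefl_simple_pos_iff[OF \<alpha> w\<beta>] False by simp
    qed
    show ?thesis
      using True Z inv bruhat_less_srefl_iff[OF weyl_comp[OF srefl_simple_in_weyl[OF \<alpha>] w] True]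
        bruhat_less_srefl_iff[OF w True]
      unfolding Sxw_def by auto
  qed
qed

end

theorem lemma5p3:
  fixes \<Phi> \<Delta> :: "'a::euclidean_space set"
    and x w :: "'a \<Rightarrow> 'a"
    and \<alpha>1 :: 'a and ws' :: "'a list" and is' :: "nat list"
  assumes rs: "root_system \<Phi>"
    and ss: "simple_system \<Phi> \<Delta>"
    and xW: "x \<in> weyl \<Delta>" and wW: "w \<in> weyl \<Delta>"
    and xw: "bruhat_less \<Phi> \<Delta> x w"
    and red: "reduced_word \<Delta> (\<alpha>1 # ws') w"
    and good: "good_word \<Phi> \<Delta> x (\<alpha>1 # ws')"
    and lamC: "Cminus_label \<Phi> \<Delta> x (\<alpha>1 # ws') (rev (lam \<Phi> \<Delta> x (\<alpha>1 # ws')))"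
    and i1: "lam \<Phi> \<Delta> x (\<alpha>1 # ws') = 1 # is'"
  shows "bruhat_less \<Phi> \<Delta> x (srefl \<alpha>1 \<circ> x)
    \<and> Sxw \<Phi> \<Delta> x (srefl \<alpha>1 \<circ> w) = Sxw \<Phi> \<Delta> x w - {word_prod (rev ws') \<alpha>1}
    \<and> reduced_word \<Delta> ws' (srefl \<alpha>1 \<circ> w) \<and> good_word \<Phi> \<Delta> x ws'
    \<and> lam \<Phi> \<Delta> x ws' = map (\<lambda>i. i - 1) is'
         \<and> Cminus_label \<Phi> \<Delta> x ws' (rev (lam \<Phi> \<Delta> x ws'))"
proof -
  interpret based_root_system \<Phi> \<Delta> using rs ss by unfold_locales
  have \<alpha>1: "\<alpha>1 \<in> \<Delta>" and ws': "set ws' \<subseteq> \<Delta>" using red by (auto simp: reduced_word_def)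
  obtain C where C: "chain_label \<Phi> \<Delta> x (\<alpha>1 # ws') C (rev is' @ [1])"
    using lamC i1 by (auto simp: Cminus_label_def)
  note chain' = chain_label_drop_first[OF red C]
  then have less: "bruhat_less \<Phi> \<Delta> x (srefl \<alpha>1 \<circ> x)" and up: "\<ell> x < \<ell> (srefl \<alpha>1 \<circ> x)"
    by (simp_all add: bruhat_cover_def)
  have lam': "lam \<Phi> \<Delta> x ws' = map (\<lambda>i. i - 1) is'" by (rule lam_drop_first[OF \<alpha>1 ws' up i1])
  have label': "rev (lam \<Phi> \<Delta> x ws') = map (\<lambda>i. i - 1) (rev is')" by (simp add: lam' rev_map)
  have "finite (lam_set \<Phi> \<Delta> x ws')" by (simp add: lam_set_def)
  then have "lam_set \<Phi> \<Delta> x ws' = set (map (\<lambda>i. i - 1) is')"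
    using set_sorted_list_of_set lam' unfolding lam_def by metis
  then have "good_word \<Phi> \<Delta> x ws'"
    using chain_label_last[OF chain'(1)] by (simp add: good_word_def)
  moreover have "Cminus_label \<Phi> \<Delta> x ws' (rev (lam \<Phi> \<Delta> x ws'))"
    using chain'(1) strict_sorted_list_of_set unfolding Cminus_label_def label'[symmetric] lam_def
    by (auto simp: sorted_wrt_rev)
  ultimately show ?thesis
    using less Sxw_srefl_left[OF red up] reduced_word_Cons[OF red] lam' by blast
qed

end
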